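(* Under the standing assumptions below, for all $x\in X$ and all $G\in\partial_B^{sw}S(x)$ it holds that $S(x+z)-S(x)\ge Gz$ $\mu$-a.e. in $\Omega$ for every $z\in X$.
   Context: Standing assumptions: $(\Omega,\Sigma,\mu)$ is a complete measure space with real Lebesgue spaces $L^p(\Omega)$, $p\in[1,\infty]$. $Y$ is a real separable reflexive Banach space with $Y\subset L^q(\Omega)$ and the inclusion $Y\hookrightarrow L^q(\Omega)$ continuous and compact, for a fixed $q\in[1,\infty]$. $X$ is a real separable Banach space. $U$ is a real reflexive Banach space with $U\subset X$ and the inclusion $U\hookrightarrow X$ continuous and compact. The map $S:X\to Y$ satisfies $S(\lambda x_1+(1-\lambda)x_2)\le\lambda S(x_1)+(1-\lambda)S(x_2)$ $\mu$-a.e. in $\Omega$ for all $x_1,x_2\in X$, $\lambda\in[0,1]$; and there is an exponent $r\in[1,\infty]$ such that for every $x\in X$ there are $C,\varepsilon>0$ with $\|S(x_1)-S(x_2)\|_Y\le C\|x_1-x_2\|_X$ for all $x_1,x_2\in X$ with $\|x_i-x\|_X\le\varepsilon$, $i=1,2$, and $\|S(x_1+z)-S(x_1)\|_{L^r(\Omega)}\le C\|z\|_U$ for all $x_1\in X$, $z\in U$ with $\|x_1-x\|_X\le\varepsilon$, $\|z\|_U\le\varepsilon$. $S$ is Gâteaux differentiable at $x\in X$ if for all $z\in X$ the limit $S'(x;z):=\lim_{t\to0^+}(S(x+tz)-S(x))/t$ exists in $Y$ and $z\mapsto S'(x;z)$ is linear and continuous; then $S'(x):=S'(x;\cdot)\in\mathcal{L}(X,Y)$.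 $\mathcal{D}_S$ denotes the set of points where $S$ is Gâteaux differentiable. WOT convergence $G_n\to G$ in $\mathcal{L}(X,Y)$ means $G_nz\rightharpoonup Gz$ weakly in $Y$ for all $z\in X$. The strong-weak Bouligand differential is $\partial_B^{sw}S(x):=\{G\in\mathcal{L}(X,Y): \exists\{x_n\}\subset\mathcal{D}_S \text{ with } x_n\to x \text{ in } X \text{ and } S'(x_n)\to G \text{ in the WOT}\}$. *)

theory Defs
  imports "HOL-Probability.Probability"
begin

text \<open>L^p (semi)norm of a real function on a measure space, for an exponent
 p in [1,infinity] represented as an extended nonnegative real (top = infinity).
 Value top means the function is not in L^p.\<close>
definition Lp_norm :: "'w measure \<Rightarrow> ennreal \<Rightarrow> ('w \<Rightarrow> real) \<Rightarrow> ennreal" where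
  "Lp_norm M p f =
     (if p = top then e2ennreal (esssup M (\<lambda>w. ereal \<bar>f w\<bar>))
      else (let I = (\<integral>\<^sup>+ w. ennreal (\<bar>f w\<bar> powr enn2real p) \<partial>M)
            in if I = top then top else ennreal (enn2real I powr (1 / enn2real p))))"

definition separable_type :: "'a::metric_space itself \<Rightarrow> bool" where
  "separable_type _ \<longleftrightarrow> (\<exists>D::'a set. countable D \<and> closure D = UNIV)"

definition reflexive_type :: "'a::real_normed_vector itself \<Rightarrow> bool" where
  "reflexive_type _ \<longleftrightarrow>
     (\<forall>\<phi> :: ('a \<Rightarrow>\<^sub>L real) \<Rightarrow>\<^sub>L real. \<exists>y::'a. \<forall>f. blinfun_apply \<phi> f = blinfun_apply f y)"

definition weak_conv :: "(nat \<Rightarrow> 'a::real_normed_vector) \<Rightarrow> 'a \<Rightarrow> bool" where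
  "weak_conv ys y \<longleftrightarrow> (\<forall>f :: 'a \<Rightarrow>\<^sub>L real. (\<lambda>n. blinfun_apply f (ys n)) \<longlonglongrightarrow> blinfun_apply f y)"

definition WOT_conv :: "(nat \<Rightarrow> 'x \<Rightarrow> 'y::real_normed_vector) \<Rightarrow> ('x \<Rightarrow> 'y) \<Rightarrow> bool" where
  "WOT_conv Gs G \<longleftrightarrow> (\<forall>z. weak_conv (\<lambda>n. Gs n z) (G z))"

definition gateaux_deriv ::
  "('x::real_normed_vector \<Rightarrow> 'y::real_normed_vector) \<Rightarrow> 'x \<Rightarrow> ('x \<Rightarrow> 'y) \<Rightarrow> bool" where
  "gateaux_deriv S x G \<longleftrightarrow> bounded_linear G \<and>
     (\<forall>z. ((\<lambda>t. (S (x + t *\<^sub>R z) - S x) /\<^sub>R t) \<longlongrightarrow> G z) (at_right 0))"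

definition gateaux_points :: "('x::real_normed_vector \<Rightarrow> 'y::real_normed_vector) \<Rightarrow> 'x set" where
  "gateaux_points S = {x. \<exists>G. gateaux_deriv S x G}"

definition gateaux_derivative ::
  "('x::real_normed_vector \<Rightarrow> 'y::real_normed_vector) \<Rightarrow> 'x \<Rightarrow> 'x \<Rightarrow> 'y" where
  "gateaux_derivative S x = (SOME G. gateaux_deriv S x G)"

definition bouligand_sw ::
  "('x::real_normed_vector \<Rightarrow> 'y::real_normed_vector) \<Rightarrow> 'x \<Rightarrow> ('x \<Rightarrow> 'y) set" where
  "bouligand_sw S x = {G. bounded_linear G \<and>
     (\<exists>xs. (\<forall>n. xs n \<in> gateaux_points S) \<and> xs \<longlonglongrightarrow> x \<and>
           WOT_conv (\<lambda>n. gateaux_derivative S (xs n)) G)}"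

end

theory Submission
  imports Defs
begin

text \<open>Convexity of \<open>S\<close> gives, for \<open>0 < t \<le> 1\<close>, that the difference quotient
  \<open>(S (x + t z) - S x) / t\<close> lies a.e. below \<open>S (x + z) - S x\<close>; letting \<open>t \<rightarrow> 0\<close> yields
  \<open>S'(x) z \<le> S (x + z) - S x\<close> at every Gateaux point. The inequality survives the strong-weak
  limit defining the Bouligand differential because \<open>S\<close> is continuous and the a.e. order on \<open>Y\<close>
  is closed under weak sequential limits: an element that is negative on a non-null set \<open>A\<close> is
  separated from the cone of a.e. nonnegative elements by a bounded functional -- integration
  over \<open>A\<close> when \<open>q < \<infinity>\<close> (then \<open>A\<close> can be chosen of finite measure), a limit along an ultrafilter
  concentrated on \<open>A\<close> when \<open>q = \<infinity>\<close>. Besides convexity and local Lipschitz continuity of \<open>S\<close>,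
  only the continuous a.e.-linear embedding of \<open>Y\<close> into \<open>L\<^sup>q\<close> is used.\<close>

lemma ultrafilter_le:
  fixes F0 :: "'a filter"
  assumes "F0 \<noteq> bot"
  obtains F where "F \<le> F0" "F \<noteq> bot" "\<And>P. eventually P F \<or> eventually (\<lambda>x. \<not> P x) F"
proof -
  define A where "A = {F. F \<le> F0 \<and> F \<noteq> bot}"
  have "\<exists>m\<in>A. \<forall>F\<in>A. F \<le> m \<longrightarrow> F = m"
  proof (rule predicate_Zorn)
    show "partial_order_on A (relation_of (\<lambda>F G. G \<le> F) A)"
      by (auto simp: partial_order_on_def preorder_on_def refl_on_def trans_def antisym_def relation_of_def)
    fix C assume C: "C \<in> Chains (relation_of (\<lambda>F G. G \<le> F) A)"
    show "\<exists>u\<in>A. \<forall>F\<in>C. u \<le> F"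
    proof (cases "C = {}")
      case True
      then show ?thesis using assms by (auto simp: A_def)
    next
      case False
      have CA: "C \<subseteq> A" and total: "\<And>F G. F \<in> C \<Longrightarrow> G \<in> C \<Longrightarrow> G \<le> F \<or> F \<le> G"
        using C by (auto simp: Chains_def relation_of_def)
      have "eventually P (Inf C) \<longleftrightarrow> (\<exists>F\<in>C. eventually P F)" for P
        by (rule eventually_Inf_base[OF False]) (metis total inf.orderE inf_commute order_refl)
      then have "Inf C \<noteq> bot"
        using CA by (auto simp: A_def simp flip: eventually_False)
      moreover have "Inf C \<le> F0"
        using False CA by (auto simp: A_def intro: Inf_lower2)
      ultimately show ?thesis
        by (auto simp: A_def intro: Inf_lower)
    qed
  qed
  then obtain F where F: "F \<le> F0" "F \<noteq> bot" and minimal: "\<And>G. G \<le> F0 \<Longrightarrow> G \<noteq> bot \<Longrightarrow> G \<le> F \<Longrightarrow> G = F"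
    by (auto simp: A_def)
  have "eventually P F \<or> eventually (\<lambda>x. \<not> P x) F" for P
  proof (rule ccontr)
    assume neither: "\<not> (eventually P F \<or> eventually (\<lambda>x. \<not> P x) F)"
    let ?G = "inf F (principal {x. P x})"
    have "?G \<noteq> bot"
      using neither by (simp add: eventually_inf_principal flip: eventually_False)
    moreover have "?G \<le> F0" using F(1) by (rule le_infI1)
    ultimately have "?G = F" by (intro minimal) auto
    moreover have "eventually P ?G"
      by (simp add: eventually_inf_principal)
    ultimately have "eventually P F" by simp
    with neither show False by simp
  qed
  with F show thesis by (rule that)
qed

lemma tendsto_ultrafilter_bounded:
  fixes g :: "'a \<Rightarrow> real"
  assumes F: "F \<noteq> bot" and ultra: "\<And>P. eventually P F \<or> eventually (\<lambda>x. \<not> P x) F"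
    and bounded: "eventually (\<lambda>x. \<bar>g x\<bar> \<le> B) F"
  obtains c where "(g \<longlongrightarrow> c) F"
proof -
  have "eventually (\<lambda>t. t \<in> {-B..B}) (filtermap g F)"
    using bounded by (auto simp: eventually_filtermap elim: eventually_mono)
  then have "\<exists>c\<in>{-B..B}. inf (nhds c) (filtermap g F) \<noteq> bot"
    using compact_Icc[of "-B" B] F unfolding compact_filter by (simp add: filtermap_bot_iff)
  then obtain c where c: "inf (nhds c) (filtermap g F) \<noteq> bot" by blast
  have "(g \<longlongrightarrow> c) F"
  proof (rule topological_tendstoI)
    fix U :: "real set" assume U: "open U" "c \<in> U"
    show "eventually (\<lambda>x. g x \<in> U) F"
    proof (rule ccontr)
      assume "\<not> eventually (\<lambda>x. g x \<in> U) F"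
      then have "eventually (\<lambda>t. t \<notin> U) (filtermap g F)"
        using ultra[of "\<lambda>x. g x \<in> U"] by (simp add: eventually_filtermap)
      moreover have "eventually (\<lambda>t. t \<in> U) (nhds c)"
        using U by (rule eventually_nhds_in_open)
      ultimately have "eventually (\<lambda>_. False) (inf (nhds c) (filtermap g F))"
        unfolding eventually_inf by blast
      with c show False by (simp add: eventually_False)
    qed
  qed
  then show thesis by (rule that)
qed

lemma bounded_linear_of_unit_ball_bound:
  fixes \<phi> :: "'a::real_normed_vector \<Rightarrow> real"
  assumes linear: "\<And>a b x y. \<phi> (a *\<^sub>R x + b *\<^sub>R y) = a * \<phi> x + b * \<phi> y"
    and bound: "\<And>x. norm x \<le> 1 \<Longrightarrow> \<bar>\<phi> x\<bar> \<le> K"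
  shows "bounded_linear \<phi>"
proof (rule bounded_linear_intro[where K = K])
  show "\<phi> (x + y) = \<phi> x + \<phi> y" for x y using linear[of 1 x 1 y] by simp
  show "\<phi> (r *\<^sub>R x) = r *\<^sub>R \<phi> x" for r x using linear[of r x 0 x] by simp
  show "norm (\<phi> x) \<le> norm x * K" for x
  proof (cases "x = 0")
    case True
    then show ?thesis using linear[of 0 x 0 x] by simp
  next
    case False
    have "\<phi> x = norm x * \<phi> (x /\<^sub>R norm x)"
      using linear[of "norm x" "x /\<^sub>R norm x" 0 x] False by simp
    also have "\<bar>\<dots>\<bar> \<le> norm x * K"
      using bound[of "x /\<^sub>R norm x"] False by (simp add: abs_mult mult_left_mono)
    finally show ?thesis by simp
  qed
qed

lemma abs_le_one_plus_powr:
  fixes e p :: real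
  assumes "1 \<le> p"
  shows "\<bar>e\<bar> \<le> 1 + \<bar>e\<bar> powr p"
proof (cases "\<bar>e\<bar> \<le> 1")
  case False
  then have "\<bar>e\<bar> powr 1 \<le> \<bar>e\<bar> powr p" using assms by (intro powr_mono) auto
  then show ?thesis using False by simp
qed (simp add: add_increasing2)

lemma AE_abs_le_of_Lp_norm_top_le:
  assumes "Lp_norm M top f \<le> ennreal c" and "0 \<le> c"
  shows "AE w in M. \<bar>f w\<bar> \<le> c"
proof -
  define e where "e = esssup M (\<lambda>w. ereal \<bar>f w\<bar>)"
  have "e \<le> max 0 e" by simp
  also have "\<dots> = enn2ereal (e2ennreal e)"
    by (simp add: enn2ereal_e2ennreal max_def e2ennreal_neg zero_ennreal.rep_eq)
  also have "\<dots> \<le> enn2ereal (ennreal c)"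
    using assms(1) by (simp add: Lp_norm_def e_def less_eq_ennreal.rep_eq)
  also have "\<dots> = ereal c" using assms(2) by simp
  finally have "e \<le> ereal c" .
  have "AE w in M. ereal \<bar>f w\<bar> \<le> e"
    unfolding e_def by (rule esssup_AE)
  then show ?thesis
    by eventually_elim (use \<open>e \<le> ereal c\<close> in \<open>auto dest: order_trans\<close>)
qed

lemma nn_integral_powr_le_of_Lp_norm_le:
  assumes "q \<noteq> top" and "1 \<le> q" and "Lp_norm M q f \<le> ennreal c" and "0 \<le> c"
  shows "(\<integral>\<^sup>+ w. ennreal (\<bar>f w\<bar> powr enn2real q) \<partial>M) \<le> ennreal (c powr enn2real q)"
proof -
  define p where "p = enn2real q"
  define I where "I = (\<integral>\<^sup>+ w. ennreal (\<bar>f w\<bar> powr p) \<partial>M)"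
  have "1 \<le> p"
    using assms(1,2) unfolding p_def by (metis enn2real_1 enn2real_mono top.not_eq_extremum)
  have "I \<noteq> top" and root_le: "enn2real I powr (1 / p) \<le> c"
    using assms(1,3,4) by (auto simp: Lp_norm_def Let_def I_def p_def top_unique split: if_splits)
  have "enn2real I = (enn2real I powr (1 / p)) powr p"
    using \<open>1 \<le> p\<close> by (simp add: powr_powr)
  also have "\<dots> \<le> c powr p"
    using root_le \<open>1 \<le> p\<close> by (intro powr_mono2) auto
  finally show ?thesis
    using \<open>I \<noteq> top\<close> unfolding I_def[symmetric] p_def[symmetric]
    by (metis ennreal_enn2real ennreal_leI top.not_eq_extremum)
qed

lemma emeasure_lt_top_of_nn_integral_powr:
  fixes f :: "'w \<Rightarrow> real"
  assumes A: "A \<in> sets M" and ge: "\<And>w. w \<in> A \<Longrightarrow> \<delta> \<le> \<bar>f w\<bar>" and "0 < \<delta>" "0 \<le> p"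
    and finite: "(\<integral>\<^sup>+ w. ennreal (\<bar>f w\<bar> powr p) \<partial>M) < \<infinity>"
  shows "emeasure M A < \<infinity>"
proof -
  have "ennreal (\<delta> powr p) * emeasure M A = (\<integral>\<^sup>+ w. ennreal (\<delta> powr p) * indicator A w \<partial>M)"
    using A by (rule nn_integral_cmult_indicator[symmetric])
  also have "\<dots> \<le> (\<integral>\<^sup>+ w. ennreal (\<bar>f w\<bar> powr p) \<partial>M)"
  proof (intro nn_integral_mono)
    fix w
    have "\<delta> powr p \<le> \<bar>f w\<bar> powr p" if "w \<in> A"
      using ge[OF that] assms(3,4) by (intro powr_mono2) auto
    then show "ennreal (\<delta> powr p) * indicator A w \<le> ennreal (\<bar>f w\<bar> powr p)"
      by (simp add: indicator_def ennreal_leI)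
  qed
  also note finite
  finally show ?thesis
    using \<open>0 < \<delta>\<close> by (cases "emeasure M A = 0") (auto simp: ennreal_mult_less_top)
qed

lemma not_AE_nonneg_level_set:
  fixes f :: "'w \<Rightarrow> real"
  assumes not_nonneg: "\<not> (AE w in M. 0 \<le> f w)"
  obtains \<delta> where "0 < \<delta>" and "{w \<in> space M. f w \<le> - \<delta>} \<notin> null_sets M"
proof (rule ccontr)
  assume "\<not> thesis"
  then have null: "{w \<in> space M. f w \<le> - inverse (Suc k)} \<in> null_sets M" for k
    using that by force
  have "{w \<in> space M. \<not> 0 \<le> f w} \<subseteq> (\<Union>k. {w \<in> space M. f w \<le> - inverse (Suc k)})"
  proof
    fix w assume "w \<in> {w \<in> space M. \<not> 0 \<le> f w}"
    then obtain k where "inverse (Suc k) < - f w" "w \<in> space M"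
      using reals_Archimedean[of "- f w"] by auto
    then have "w \<in> {w \<in> space M. f w \<le> - inverse (Suc k)}" by simp
    then show "w \<in> (\<Union>k. {w \<in> space M. f w \<le> - inverse (Suc k)})" by blast
  qed
  with null have "AE w in M. 0 \<le> f w"
    by (intro AE_I'[OF null_sets_UN]) auto
  with not_nonneg show False by simp
qed

lemma tendsto_imp_weak_conv: "ys \<longlonglongrightarrow> y \<Longrightarrow> weak_conv ys y"
  unfolding weak_conv_def by (intro allI blinfun.tendsto tendsto_const)

lemma weak_conv_diff:
  assumes "weak_conv xs x" and "weak_conv ys y"
  shows "weak_conv (\<lambda>n. xs n - ys n) (x - y)"
  using assms unfolding weak_conv_def by (simp add: blinfun.diff_right tendsto_diff)

lemma isCont_of_local_lipschitz:
  fixes S :: "'a::real_normed_vector \<Rightarrow> 'b::real_normed_vector"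
  assumes "0 < \<epsilon>" and "0 \<le> C"
    and "\<forall>x1 x2. norm (x1 - x) \<le> \<epsilon> \<longrightarrow> norm (x2 - x) \<le> \<epsilon> \<longrightarrow> norm (S x1 - S x2) \<le> C * norm (x1 - x2)"
  shows "isCont S x"
proof -
  have "C-lipschitz_on (cball x \<epsilon>) S"
    using assms(2,3) by (intro lipschitz_onI) (auto simp: dist_norm norm_minus_commute)
  then have "continuous_on (cball x \<epsilon>) S"
    by (rule lipschitz_on_continuous_on)
  moreover have "x \<in> interior (cball x \<epsilon>)"
    using assms(1) interior_mono[OF ball_subset_cball[of x \<epsilon>]] by (auto simp: interior_open)
  ultimately show ?thesis
    by (rule continuous_on_interior)
qed

lemma gateaux_deriv_gateaux_derivative:
  "x \<in> gateaux_points S \<Longrightarrow> gateaux_deriv S x (gateaux_derivative S x)"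
  unfolding gateaux_points_def gateaux_derivative_def by (simp add: someI_ex)

locale ae_linear_map =
  fixes M :: "'w measure" and emb :: "'y::real_normed_vector \<Rightarrow> 'w \<Rightarrow> real"
  assumes ae_linear: "\<And>a b y1 y2. AE w in M. emb (a *\<^sub>R y1 + b *\<^sub>R y2) w = a * emb y1 w + b * emb y2 w"
begin

lemma AE_emb_diff: "AE w in M. emb (y1 - y2) w = emb y1 w - emb y2 w"
  using ae_linear[of 1 y1 "-1" y2] by simp

text \<open>For \<open>q = \<infinity>\<close> the set \<open>A\<close> need not contain a subset of finite positive measure, so
  integration over \<open>A\<close> is replaced by a limit along an ultrafilter refining the a.e. filter
  restricted to \<open>A\<close>.\<close>

lemma separating_functional_ultralimit:
  assumes K: "0 \<le> K" and bound: "\<And>y. AE w in M. \<bar>emb y w\<bar> \<le> K * norm y"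
    and A: "A \<in> sets M" "A \<notin> null_sets M" and neg: "\<And>w. w \<in> A \<Longrightarrow> emb d w \<le> - \<delta>" and \<delta>: "0 < \<delta>"
  obtains \<phi> :: "'y \<Rightarrow>\<^sub>L real" where "\<And>y. (AE w in M. 0 \<le> emb y w) \<Longrightarrow> 0 \<le> \<phi> y" and "\<phi> d < 0"
proof -
  have "inf (ae_filter M) (principal A) \<noteq> bot"
    using A by (simp add: AE_iff_null_sets eventually_inf_principal flip: eventually_False)
  then obtain F where F: "F \<le> inf (ae_filter M) (principal A)" "F \<noteq> bot"
    and ultra: "\<And>P. eventually P F \<or> eventually (\<lambda>x. \<not> P x) F"
    by (rule ultrafilter_le) blast+
  have AE_F: "eventually P F" if "AE w in M. P w" for P
    using that F(1) by (auto intro: filter_leD le_infI1)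
  have in_A: "eventually (\<lambda>w. w \<in> A) F"
    using F(1) by (auto intro: filter_leD le_infI2 eventually_principal[THEN iffD2])
  define \<phi> where "\<phi> y = Lim F (emb y)" for y
  have lim: "(emb y \<longlongrightarrow> \<phi> y) F" for y
  proof -
    obtain c where "(emb y \<longlongrightarrow> c) F"
      using F(2) ultra AE_F[OF bound[of y]] by (rule tendsto_ultrafilter_bounded)
    with tendsto_Lim[OF F(2)] show ?thesis unfolding \<phi>_def by metis
  qed
  have linear: "\<phi> (a *\<^sub>R y1 + b *\<^sub>R y2) = a * \<phi> y1 + b * \<phi> y2" for a b y1 y2
  proof -
    have "((\<lambda>w. a * emb y1 w + b * emb y2 w) \<longlongrightarrow> a * \<phi> y1 + b * \<phi> y2) F"
      by (intro tendsto_intros lim)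
    then have "(emb (a *\<^sub>R y1 + b *\<^sub>R y2) \<longlongrightarrow> a * \<phi> y1 + b * \<phi> y2) F"
      using tendsto_cong[OF AE_F[OF ae_linear[of a y1 b y2]]] by simp
    with lim show ?thesis by (rule tendsto_unique[OF F(2)])
  qed
  have "bounded_linear \<phi>"
  proof (rule bounded_linear_of_unit_ball_bound[OF linear])
    fix y :: 'y assume "norm y \<le> 1"
    then have "K * norm y \<le> K" using K by (simp add: mult_left_le)
    with AE_F[OF bound[of y]] have "eventually (\<lambda>w. \<bar>emb y w\<bar> \<le> K) F"
      by (auto elim: eventually_mono)
    then show "\<bar>\<phi> y\<bar> \<le> K"
      using tendsto_upperbound[OF tendsto_rabs[OF lim] _ F(2)] by blast
  qed
  moreover have "0 \<le> \<phi> y" if "AE w in M. 0 \<le> emb y w" for y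
    using tendsto_lowerbound[OF lim AE_F[OF that] F(2)] .
  moreover have "\<phi> d < 0"
  proof -
    have "eventually (\<lambda>w. emb d w \<le> - \<delta>) F"
      using in_A by (rule eventually_mono) (rule neg)
    then have "\<phi> d \<le> - \<delta>" using tendsto_upperbound[OF lim _ F(2)] by blast
    with \<delta> show ?thesis by simp
  qed
  ultimately show thesis
    by (intro that[of "Blinfun \<phi>"]) (simp_all add: bounded_linear_Blinfun_apply)
qed

lemma separating_functional_integral:
  assumes meas: "\<And>y. emb y \<in> borel_measurable M"
    and p: "1 \<le> p" and K: "0 \<le> K"
    and bound: "\<And>y. (\<integral>\<^sup>+ w. ennreal (\<bar>emb y w\<bar> powr p) \<partial>M) \<le> ennreal ((K * norm y) powr p)"
    and A: "A \<in> sets M" "emeasure M A < \<infinity>" "A \<notin> null_sets M"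
    and neg: "\<And>w. w \<in> A \<Longrightarrow> emb d w \<le> - \<delta>" and \<delta>: "0 < \<delta>"
  obtains \<phi> :: "'y \<Rightarrow>\<^sub>L real" where "\<And>y. (AE w in M. 0 \<le> emb y w) \<Longrightarrow> 0 \<le> \<phi> y" and "\<phi> d < 0"
proof -
  define g where "g y w = indicator A w * emb y w" for y w
  have g_meas: "g y \<in> borel_measurable M" for y
    unfolding g_def using A(1) meas by measurable
  have measure_A: "emeasure M A = ennreal (measure M A)"
    using A(2) by (simp add: emeasure_eq_ennreal_measure)
  \<comment> \<open>\<open>\<bar>e\<bar> \<le> 1 + \<bar>e\<bar> powr p\<close> stands in for Hoelder's inequality.\<close>
  have g_nn_integral: "(\<integral>\<^sup>+ w. ennreal \<bar>g y w\<bar> \<partial>M) \<le> ennreal (measure M A + (K * norm y) powr p)" for y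
  proof -
    have "(\<integral>\<^sup>+ w. ennreal \<bar>g y w\<bar> \<partial>M) \<le>
        (\<integral>\<^sup>+ w. ennreal (indicator A w) + ennreal (\<bar>emb y w\<bar> powr p) \<partial>M)"
      using abs_le_one_plus_powr[OF p]
      by (intro nn_integral_mono) (auto simp: g_def indicator_def simp flip: ennreal_plus)
    also have "\<dots> = emeasure M A + (\<integral>\<^sup>+ w. ennreal (\<bar>emb y w\<bar> powr p) \<partial>M)"
      using A(1) meas by (subst nn_integral_add) (auto simp: ennreal_indicator)
    also have "\<dots> \<le> ennreal (measure M A) + ennreal ((K * norm y) powr p)"
      using bound[of y] measure_A by (intro add_mono) auto
    finally show ?thesis by (simp flip: ennreal_plus)
  qed
  have g_int: "integrable M (g y)" for y
    using g_meas g_nn_integral[of y] by (intro integrableI_bounded) (auto simp: top.not_eq_extremum intro: le_less_trans)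
  define \<phi> where "\<phi> y = integral\<^sup>L M (g y)" for y
  have linear: "\<phi> (a *\<^sub>R y1 + b *\<^sub>R y2) = a * \<phi> y1 + b * \<phi> y2" for a b y1 y2
  proof -
    have "\<phi> (a *\<^sub>R y1 + b *\<^sub>R y2) = integral\<^sup>L M (\<lambda>w. a * g y1 w + b * g y2 w)"
      unfolding \<phi>_def
      by (intro integral_cong_AE g_meas borel_measurable_add borel_measurable_times borel_measurable_const)
        (use ae_linear[of a y1 b y2] in \<open>auto simp: g_def algebra_simps elim!: AE_mp\<close>)
    also have "\<dots> = a * \<phi> y1 + b * \<phi> y2"
      unfolding \<phi>_def using g_int[of y1] g_int[of y2] by simp
    finally show ?thesis .
  qed
  have "bounded_linear \<phi>"
  proof (rule bounded_linear_of_unit_ball_bound[OF linear])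
    fix y :: 'y assume y: "norm y \<le> 1"
    have "ennreal \<bar>\<phi> y\<bar> \<le> (\<integral>\<^sup>+ w. ennreal \<bar>g y w\<bar> \<partial>M)"
      using integral_norm_bound_ennreal[OF g_int[of y]] by (simp add: \<phi>_def)
    also have "\<dots> \<le> ennreal (measure M A + (K * norm y) powr p)" by (rule g_nn_integral)
    also have "\<dots> \<le> ennreal (measure M A + K powr p)"
      using K y p by (intro ennreal_leI add_left_mono powr_mono2) (auto simp: mult_left_le)
    finally show "\<bar>\<phi> y\<bar> \<le> measure M A + K powr p"
      by (simp add: ennreal_le_iff add_nonneg_nonneg flip: ennreal_plus)
  qed
  moreover have "0 \<le> \<phi> y" if "AE w in M. 0 \<le> emb y w" for y
    unfolding \<phi>_def using that by (intro integral_nonneg_AE) (auto simp: g_def elim: AE_mp)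
  moreover have "\<phi> d < 0"
  proof -
    have "\<phi> d \<le> integral\<^sup>L M (\<lambda>w. - \<delta> * indicator A w)"
      unfolding \<phi>_def using A neg
      by (intro integral_mono g_int integrable_mult_right integrable_real_indicator)
        (auto simp: g_def indicator_def)
    also have "\<dots> = - \<delta> * measure M A"
      using A(1) by simp
    also have "\<dots> < 0"
    proof -
      have "emeasure M A \<noteq> 0" using A(1,3) by (simp add: null_sets_def)
      then have "0 < measure M A" using measure_A by (metis ennreal_0 measure_nonneg order_le_less)
      with \<delta> show ?thesis by simp
    qed
    finally show ?thesis .
  qed
  ultimately show thesis
    by (intro that[of "Blinfun \<phi>"]) (simp_all add: bounded_linear_Blinfun_apply)
qed

lemma separating_functional_Lp:
  assumes meas: "\<And>y. emb y \<in> borel_measurable M" and q: "1 \<le> q"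
    and bound: "\<And>y. Lp_norm M q (emb y) \<le> ennreal (C * norm y)"
    and not_nonneg: "\<not> (AE w in M. 0 \<le> emb d w)"
  obtains \<phi> :: "'y \<Rightarrow>\<^sub>L real" where "\<And>y. (AE w in M. 0 \<le> emb y w) \<Longrightarrow> 0 \<le> \<phi> y" and "\<phi> d < 0"
proof -
  obtain \<delta> where \<delta>: "0 < \<delta>" and A_not_null: "{w \<in> space M. emb d w \<le> - \<delta>} \<notin> null_sets M"
    using not_nonneg by (rule not_AE_nonneg_level_set)
  define A where "A = {w \<in> space M. emb d w \<le> - \<delta>}"
  have A: "A \<in> sets M" "A \<notin> null_sets M" "\<And>w. w \<in> A \<Longrightarrow> emb d w \<le> - \<delta>"
    unfolding A_def using meas[of d] A_not_null by auto
  have abs_bound: "Lp_norm M q (emb y) \<le> ennreal (\<bar>C\<bar> * norm y)" for y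
    using bound[of y] by (rule order_trans) (simp add: ennreal_leI mult_right_mono)
  show thesis
  proof (cases "q = top")
    case True
    have "AE w in M. \<bar>emb y w\<bar> \<le> \<bar>C\<bar> * norm y" for y
      using abs_bound[of y] True by (intro AE_abs_le_of_Lp_norm_top_le) auto
    from separating_functional_ultralimit[OF abs_ge_zero this A \<delta>] that show thesis by blast
  next
    case False
    define p where "p = enn2real q"
    have p: "1 \<le> p"
      using q False unfolding p_def by (metis enn2real_1 enn2real_mono top.not_eq_extremum)
    have integral_bound: "(\<integral>\<^sup>+ w. ennreal (\<bar>emb y w\<bar> powr p) \<partial>M) \<le> ennreal ((\<bar>C\<bar> * norm y) powr p)" for y
      unfolding p_def using False q abs_bound by (rule nn_integral_powr_le_of_Lp_norm_le) simp
    have "emeasure M A < \<infinity>"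
    proof (rule emeasure_lt_top_of_nn_integral_powr[OF A(1) _ \<delta>])
      show "\<delta> \<le> \<bar>emb d w\<bar>" if "w \<in> A" for w
        using A(3)[OF that] by simp
      show "(\<integral>\<^sup>+ w. ennreal (\<bar>emb d w\<bar> powr p) \<partial>M) < \<infinity>"
        using integral_bound[of d] by (simp add: le_less_trans)
    qed (use p in simp)
    with separating_functional_integral[OF meas p _ integral_bound A(1) _ A(2,3) \<delta>] that
    show thesis by auto
  qed
qed

lemma AE_le_weak_limit:
  assumes meas: "\<And>y. emb y \<in> borel_measurable M" and q: "1 \<le> q"
    and bound: "\<And>y. Lp_norm M q (emb y) \<le> ennreal (C * norm y)"
    and ys: "weak_conv ys y" and zs: "weak_conv zs z"
    and le: "\<And>n. AE w in M. emb (ys n) w \<le> emb (zs n) w"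
  shows "AE w in M. emb y w \<le> emb z w"
proof -
  have "AE w in M. 0 \<le> emb (z - y) w"
  proof (rule ccontr)
    assume "\<not> (AE w in M. 0 \<le> emb (z - y) w)"
    with meas q bound obtain \<phi> :: "'y \<Rightarrow>\<^sub>L real"
      where nonneg: "\<And>y. (AE w in M. 0 \<le> emb y w) \<Longrightarrow> 0 \<le> \<phi> y" and "\<phi> (z - y) < 0"
      by (rule separating_functional_Lp) blast
    have "(\<lambda>n. \<phi> (zs n - ys n)) \<longlonglongrightarrow> \<phi> (z - y)"
      using weak_conv_diff[OF zs ys] unfolding weak_conv_def by blast
    moreover have "0 \<le> \<phi> (zs n - ys n)" for n
      using le[of n] AE_emb_diff[of "zs n" "ys n"] by (intro nonneg) (auto elim: AE_mp)
    ultimately have "0 \<le> \<phi> (z - y)"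
      by (intro LIMSEQ_le_const) auto
    with \<open>\<phi> (z - y) < 0\<close> show False by simp
  qed
  with AE_emb_diff[of z y] show ?thesis
    by eventually_elim simp
qed

lemma difference_quotient_le_secant:
  fixes S :: "'x::real_vector \<Rightarrow> 'y"
  assumes convex: "\<And>x1 x2 l. 0 \<le> l \<Longrightarrow> l \<le> 1 \<Longrightarrow>
      AE w in M. emb (S (l *\<^sub>R x1 + (1 - l) *\<^sub>R x2)) w \<le> l * emb (S x1) w + (1 - l) * emb (S x2) w"
    and t: "0 < t" "t \<le> 1"
  shows "AE w in M. emb ((S (x + t *\<^sub>R z) - S x) /\<^sub>R t) w \<le> emb (S (x + z) - S x) w"
proof -
  have "t *\<^sub>R (x + z) + (1 - t) *\<^sub>R x = x + t *\<^sub>R z"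
    by (simp add: algebra_simps)
  then have secant: "AE w in M. emb (S (x + t *\<^sub>R z)) w \<le> t * emb (S (x + z)) w + (1 - t) * emb (S x) w"
    using convex[of t "x + z" x] t by simp
  have quotient_eq: "(S (x + t *\<^sub>R z) - S x) /\<^sub>R t = inverse t *\<^sub>R S (x + t *\<^sub>R z) + (- inverse t) *\<^sub>R S x"
    by (simp add: scaleR_diff_right)
  have quotient: "AE w in M. emb ((S (x + t *\<^sub>R z) - S x) /\<^sub>R t) w
      = (emb (S (x + t *\<^sub>R z)) w - emb (S x) w) / t"
    using ae_linear[of "inverse t" "S (x + t *\<^sub>R z)" "- inverse t" "S x"]
    unfolding quotient_eq by (rule eventually_mono) (simp add: divide_inverse algebra_simps)
  from secant quotient AE_emb_diff[of "S (x + z)" "S x"] show ?thesis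
  proof eventually_elim
    case (elim w)
    have "emb (S (x + t *\<^sub>R z)) w - emb (S x) w \<le> (emb (S (x + z)) w - emb (S x) w) * t"
      using elim(1) by (simp add: algebra_simps)
    with elim(2,3) t show ?case by (simp add: divide_le_eq)
  qed
qed

lemma gateaux_deriv_le_difference:
  fixes S :: "'x::real_normed_vector \<Rightarrow> 'y"
  assumes convex: "\<And>x1 x2 l. 0 \<le> l \<Longrightarrow> l \<le> 1 \<Longrightarrow>
      AE w in M. emb (S (l *\<^sub>R x1 + (1 - l) *\<^sub>R x2)) w \<le> l * emb (S x1) w + (1 - l) * emb (S x2) w"
    and closed: "\<And>ys y c. ys \<longlonglongrightarrow> y \<Longrightarrow> (\<And>n. AE w in M. emb (ys n) w \<le> emb c w) \<Longrightarrow>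
      AE w in M. emb y w \<le> emb c w"
    and G: "gateaux_deriv S x G"
  shows "AE w in M. emb (G z) w \<le> emb (S (x + z) - S x) w"
proof (rule closed)
  define t where "t k = inverse (real (Suc k))" for k
  have "t \<longlonglongrightarrow> 0"
    unfolding t_def by (rule LIMSEQ_inverse_real_of_nat)
  then have "filterlim t (at_right 0) sequentially"
    by (rule tendsto_imp_filterlim_at_right) (simp add: t_def)
  moreover have "((\<lambda>s. (S (x + s *\<^sub>R z) - S x) /\<^sub>R s) \<longlongrightarrow> G z) (at_right 0)"
    using G unfolding gateaux_deriv_def by blast
  ultimately show "(\<lambda>k. (S (x + t k *\<^sub>R z) - S x) /\<^sub>R t k) \<longlonglongrightarrow> G z"
    by (rule filterlim_compose[rotated])
  show "AE w in M. emb ((S (x + t k *\<^sub>R z) - S x) /\<^sub>R t k) w \<le> emb (S (x + z) - S x) w" for k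
    by (rule difference_quotient_le_secant[OF convex]) (simp_all add: t_def inverse_le_1_iff)
qed

end

theorem mainTheorem4:
  fixes M :: "'w measure"
    and q r :: ennreal
    and emb :: "'y::banach \<Rightarrow> 'w \<Rightarrow> real"
    and j :: "'u::banach \<Rightarrow> 'x::banach"
    and S :: "'x \<Rightarrow> 'y"
  assumes M_complete: "complete_measure M"
    and q_ge: "1 \<le> q"
    and r_ge: "1 \<le> r"
    and Y_sep: "separable_type TYPE('y)"
    and Y_refl: "reflexive_type TYPE('y)"
    and emb_meas: "\<And>y. emb y \<in> borel_measurable M"
    and emb_Lq: "\<And>y. Lp_norm M q (emb y) < top"
    and emb_lin: "\<And>a b y1 y2. AE w in M. emb (a *\<^sub>R y1 + b *\<^sub>R y2) w = a * emb y1 w + b * emb y2 w"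
    and emb_inj: "\<And>y. (AE w in M. emb y w = 0) \<Longrightarrow> y = 0"
    and emb_cont: "\<exists>C. \<forall>y. Lp_norm M q (emb y) \<le> ennreal (C * norm y)"
    and emb_compact: "\<And>ys :: nat \<Rightarrow> 'y. bounded (range ys) \<Longrightarrow>
           \<exists>sub f. strict_mono sub \<and> f \<in> borel_measurable M \<and> Lp_norm M q f < top \<and>
             (\<lambda>n. Lp_norm M q (\<lambda>w. emb (ys (sub n)) w - f w)) \<longlonglongrightarrow> 0"
    and X_sep: "separable_type TYPE('x)"
    and U_refl: "reflexive_type TYPE('u)"
    and j_lin: "bounded_linear j"
    and j_inj: "inj j"
    and j_compact: "compact (closure (j ` cball 0 1))"
    and S_convex: "\<And>x1 x2 l. 0 \<le> l \<Longrightarrow> l \<le> 1 \<Longrightarrow>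
           AE w in M. emb (S (l *\<^sub>R x1 + (1 - l) *\<^sub>R x2)) w \<le> l * emb (S x1) w + (1 - l) * emb (S x2) w"
    and S_lip: "\<And>x. \<exists>C>0. \<exists>\<epsilon>>0.
           (\<forall>x1 x2. norm (x1 - x) \<le> \<epsilon> \<longrightarrow> norm (x2 - x) \<le> \<epsilon> \<longrightarrow>
               norm (S x1 - S x2) \<le> C * norm (x1 - x2)) \<and>
           (\<forall>x1 z. norm (x1 - x) \<le> \<epsilon> \<longrightarrow> norm z \<le> \<epsilon> \<longrightarrow>
               Lp_norm M r (\<lambda>w. emb (S (x1 + j z)) w - emb (S x1) w) \<le> ennreal (C * norm z))"
    and G_mem: "G \<in> bouligand_sw S x"
  shows "\<forall>z. AE w in M. emb (S (x + z)) w - emb (S x) w \<ge> emb (G z) w"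
proof
  fix z
  interpret ae_linear_map M emb
    by unfold_locales (rule emb_lin)
  obtain C where C: "\<And>y. Lp_norm M q (emb y) \<le> ennreal (C * norm y)"
    using emb_cont by blast
  note weak_closed = AE_le_weak_limit[OF emb_meas q_ge C]
  have strong_closed: "AE w in M. emb y w \<le> emb c w"
    if "ys \<longlonglongrightarrow> y" and "\<And>n. AE w in M. emb (ys n) w \<le> emb c w" for ys y c
    using tendsto_imp_weak_conv[OF that(1)] tendsto_imp_weak_conv[OF tendsto_const] that(2)
    by (rule weak_closed)
  have S_cont: "isCont S x'" for x'
    using S_lip[of x'] by (blast intro: isCont_of_local_lipschitz less_imp_le)
  from G_mem obtain xs where xs: "\<And>n. xs n \<in> gateaux_points S" "xs \<longlonglongrightarrow> x"
    and G_lim: "WOT_conv (\<lambda>n. gateaux_derivative S (xs n)) G"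
    unfolding bouligand_sw_def by blast
  have "AE w in M. emb (G z) w \<le> emb (S (x + z) - S x) w"
  proof (rule weak_closed)
    show "weak_conv (\<lambda>n. gateaux_derivative S (xs n) z) (G z)"
      using G_lim by (simp add: WOT_conv_def)
    show "weak_conv (\<lambda>n. S (xs n + z) - S (xs n)) (S (x + z) - S x)"
      by (intro tendsto_imp_weak_conv tendsto_diff isCont_tendsto_compose[OF S_cont]
          tendsto_add xs(2) tendsto_const)
    show "AE w in M. emb (gateaux_derivative S (xs n) z) w \<le> emb (S (xs n + z) - S (xs n)) w" for n
      using S_convex strong_closed gateaux_deriv_gateaux_derivative[OF xs(1)]
      by (rule gateaux_deriv_le_difference)
  qed
  with AE_emb_diff[of "S (x + z)" "S x"] show "AE w in M. emb (S (x + z)) w - emb (S x) w \<ge> emb (G z) w"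
    by eventually_elim simp
qed

end
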